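(* A complex tensor $T\in\mathbb{C}^{n\times n\times n}$ of order 3 belongs to $\mathrm{OT}_n(\mathbb{C})$ if and only if each of the three families of slices of $T$ (the $x$-slices, the $y$-slices and the $z$-slices), denoting the family by $M_1,\dots,M_n$, satisfies: (i) for each $k$, $M_k^TM_k$ is diagonalizable and $\operatorname{rank}M_k=\operatorname{rank}M_k^TM_k$; and (ii) the matrices $M_kM_l^T$ and $M_k^TM_l$ are symmetric for all $k,l\in\{1,\dots,n\}$.
   Context: Associate to $T$ the trilinear form $t(x,y,z)=\sum_{i,j,k}T_{ijk}x_iy_jz_k$. $\mathrm{OT}_n(\mathbb{C})$ is the set of tensors whose trilinear form can be written $t(x,y,z)=g(Ax,By,Cz)$ with $A,B,C\in M_n(\mathbb{C})$ complex orthogonal ($A^TA=\mathrm{Id}$ etc.) and $g(x,y,z)=\sum_{i=1}^n\alpha_ix_iy_iz_i$, $\alpha_i\in\mathbb{C}$. Slices: $X_k=(T_{kjl})_{j,l}$ (matrix of $\partial t/\partial x_k$ in $(y,z)$), $Y_k=(T_{ikl})_{i,l}$ (matrix of $\partial t/\partial y_k$ in $(x,z)$), $Z_k=(T_{ijk})_{i,j}$ (matrix of $\partial t/\partial z_k$ in $(x,y)$). *)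

theory Defs
  imports "HOL-Analysis.Analysis"
begin

definition trilin :: "complex^'n^'n^'n \<Rightarrow> complex^'n \<Rightarrow> complex^'n \<Rightarrow> complex^'n \<Rightarrow> complex"
  where "trilin T x y z = (\<Sum>i\<in>UNIV. \<Sum>j\<in>UNIV. \<Sum>k\<in>UNIV. T$i$j$k * x$i * y$j * z$k)"

text \<open>Complex orthogonal matrix: A^T A = Id (no conjugation).\<close>
definition corth :: "complex^'n^'n \<Rightarrow> bool"
  where "corth A \<longleftrightarrow> transpose A ** A = mat 1"

definition OT :: "(complex^'n^'n^'n) set"
  where "OT = {T. \<exists>A B C (\<alpha>::complex^'n). corth A \<and> corth B \<and> corth C \<and>
     (\<forall>x y z. trilin T x y z = (\<Sum>i\<in>UNIV. \<alpha>$i * (A *v x)$i * (B *v y)$i * (C *v z)$i))}"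

definition is_diag_mat :: "complex^'n^'n \<Rightarrow> bool"
  where "is_diag_mat D \<longleftrightarrow> (\<forall>i j. i \<noteq> j \<longrightarrow> D$i$j = 0)"

definition diagonalizable :: "complex^'n^'n \<Rightarrow> bool"
  where "diagonalizable M \<longleftrightarrow> (\<exists>P::complex^'n^'n. invertible P \<and> is_diag_mat (matrix_inv P ** M ** P))"

definition xslice :: "complex^'n^'n^'n \<Rightarrow> 'n \<Rightarrow> complex^'n^'n"
  where "xslice T k = (\<chi> j l. T$k$j$l)"
definition yslice :: "complex^'n^'n^'n \<Rightarrow> 'n \<Rightarrow> complex^'n^'n"
  where "yslice T k = (\<chi> i l. T$i$k$l)"
definition zslice :: "complex^'n^'n^'n \<Rightarrow> 'n \<Rightarrow> complex^'n^'n"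
  where "zslice T k = (\<chi> i j. T$i$j$k)"

definition slice_cond :: "('n \<Rightarrow> complex^'n^'n) \<Rightarrow> bool"
  where "slice_cond M \<longleftrightarrow>
     (\<forall>k. diagonalizable (transpose (M k) ** M k) \<and> rank (M k) = rank (transpose (M k) ** M k)) \<and>
     (\<forall>k l. transpose (M k ** transpose (M l)) = M k ** transpose (M l) \<and>
            transpose (transpose (M k) ** M l) = transpose (M k) ** M l)"

end

theory Submission
  imports Defs
begin

text \<open>Complex orthogonal matrices preserve the symmetric bilinear form
  \<open>x \<bullet> y = \<Sum>\<^sub>i x\<^sub>i y\<^sub>i\<close> (no conjugation). If \<open>T\<close> is orthogonally diagonal, each family of
  slices has the shape \<open>M\<^sub>k = Q\<^sup>T D\<^sub>k R\<close> with \<open>Q, R\<close> orthogonal and \<open>D\<^sub>k\<close> diagonal, and the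
  symmetry, diagonalisability and rank conditions can be read off.

  Conversely, the conditions on the \<open>x\<close>-slices make the matrices \<open>M\<^sub>a\<^sup>T M\<^sub>b\<close> a commuting
  family of symmetric diagonalisable matrices. Since every nonzero nondegenerate subspace
  contains a non-isotropic vector, such a family has a common eigenbasis \<open>C\<close> that is
  orthonormal for the bilinear form, and every \<open>M\<^sub>k\<close> maps \<open>C\<^sub>i\<close> to a multiple \<open>W\<^sub>i\<^sub>k\<close> of a
  single unit vector \<open>B\<^sub>i\<close>. This gives \<open>T\<^sub>k\<^sub>j\<^sub>l = \<Sum>\<^sub>i W\<^sub>i\<^sub>k B\<^sub>i\<^sub>j C\<^sub>i\<^sub>l\<close> with \<open>B, C\<close>
  orthogonal. The conditions on the \<open>y\<close>-slices then force the rows of \<open>W\<close> to be pairwise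
  orthogonal and non-isotropic, so that \<open>W = diag(\<alpha>) A\<close> with \<open>A\<close> orthogonal.\<close>

text \<open>Unlike an inner product, \<open>bdot\<close> has nonzero isotropic vectors (\<open>bdot v v = 0\<close>).\<close>

definition bdot :: "complex^'n \<Rightarrow> complex^'n \<Rightarrow> complex" where
  "bdot x y = (\<Sum>i\<in>UNIV. x$i * y$i)"

lemma bdot_commute: "bdot x y = bdot y x"
  unfolding bdot_def by (simp add: mult.commute)

lemma bdot_add_left: "bdot (x + y) z = bdot x z + bdot y z"
  unfolding bdot_def by (simp add: distrib_right sum.distrib)

lemma bdot_add_right: "bdot z (x + y) = bdot z x + bdot z y"
  unfolding bdot_def by (simp add: distrib_left sum.distrib)

lemma bdot_diff_right: "bdot z (x - y) = bdot z x - bdot z y"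
  unfolding bdot_def by (simp add: right_diff_distrib sum_subtractf)

lemma bdot_scale_left: "bdot (c *s x) y = c * bdot x y"
  unfolding bdot_def by (simp add: sum_distrib_left mult.assoc)

lemma bdot_scale_right: "bdot y (c *s x) = c * bdot y x"
  unfolding bdot_def by (simp add: sum_distrib_left algebra_simps)

lemma bdot_zero_left [simp]: "bdot 0 x = 0"
  and bdot_zero_right [simp]: "bdot x 0 = 0"
  unfolding bdot_def by simp_all

lemma bdot_sum_left: "bdot (\<Sum>i\<in>S. f i) y = (\<Sum>i\<in>S. bdot (f i) y)"
  unfolding bdot_def by (simp add: sum_distrib_right sum_component) (rule sum.swap)

lemma bdot_sum_right: "bdot y (\<Sum>i\<in>S. f i) = (\<Sum>i\<in>S. bdot y (f i))"
  using bdot_sum_left[of f S y] by (simp add: bdot_commute)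

lemma bdot_axis: "bdot x (axis j 1) = x$j"
  unfolding bdot_def axis_def by (simp add: if_distrib cong: if_cong)

lemma bdot_nondegenerate: "(\<And>y. bdot x y = 0) \<Longrightarrow> x = 0"
  by (metis bdot_axis vec_eq_iff zero_index)

lemma matrix_vector_mult_component: "(A *v x)$i = bdot (A$i) x"
  unfolding bdot_def matrix_vector_mult_def by simp

lemma matrix_vector_mult_axis:
  fixes A :: "complex^'n^'m"
  shows "(A *v axis j 1)$i = A$i$j"
  by (simp add: matrix_vector_mult_component bdot_axis)

lemma bdot_matrix_vector_mult: "bdot (A *v x) y = bdot x (transpose A *v y)"
  unfolding bdot_def matrix_vector_mult_def transpose_def
  by (simp add: sum_distrib_left sum_distrib_right algebra_simps) (rule sum.swap)

lemma matrix_mul_transpose_component: "(C ** transpose D)$i$j = bdot (C$i) (D$j)"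
  unfolding matrix_matrix_mult_def transpose_def bdot_def by simp

lemma bdot_span_eq_0:
  assumes "u \<in> vec.span S" and "\<And>s. s \<in> S \<Longrightarrow> bdot w s = 0"
  shows "bdot w u = 0"
proof -
  have "vec.subspace {u. bdot w u = 0}"
    unfolding vec.subspace_def by (simp add: bdot_add_right bdot_scale_right)
  then show ?thesis
    using assms vec.span_induct[of u S "\<lambda>u. bdot w u = 0"] by auto
qed

definition perp_in :: "(complex^'n) set \<Rightarrow> (complex^'n) set \<Rightarrow> (complex^'n) set" where
  "perp_in W Q = {v\<in>W. \<forall>q\<in>Q. bdot q v = 0}"

lemma subspace_perp_in: "vec.subspace W \<Longrightarrow> vec.subspace (perp_in W Q)"
  unfolding vec.subspace_def perp_in_def by (simp add: bdot_add_right bdot_scale_right)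

text \<open>One of \<open>w\<close>, \<open>v\<close>, \<open>w + v\<close> is non-isotropic, and over \<open>\<complex>\<close> every non-isotropic
  vector can be rescaled to length 1.\<close>

lemma subspace_has_unit_vector:
  assumes W: "vec.subspace W" "w \<in> W" "v \<in> W" and wv: "bdot w v \<noteq> 0"
  shows "\<exists>q\<in>W. bdot q q = 1"
proof -
  have "bdot (w + v) (w + v) = bdot w w + bdot v v + 2 * bdot w v"
    by (simp add: bdot_add_left bdot_add_right bdot_commute[of v w])
  then obtain p where p: "p \<in> W" "bdot p p \<noteq> 0"
    using W wv vec.subspace_add[OF W] by (metis add_0 mult_eq_0_iff zero_neq_numeral)
  define q where "q = (1 / csqrt (bdot p p)) *s p"
  have "bdot q q = bdot p p / (csqrt (bdot p p))\<^sup>2"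
    unfolding q_def bdot_scale_left bdot_scale_right by (simp add: power2_eq_square)
  then have "bdot q q = 1" using p(2) by simp
  moreover have "q \<in> W" unfolding q_def by (rule vec.subspace_scale[OF W(1) p(1)])
  ultimately show ?thesis by blast
qed

definition orthonormal_on :: "'a set \<Rightarrow> ('a \<Rightarrow> complex^'n) \<Rightarrow> bool" where
  "orthonormal_on I b \<longleftrightarrow> (\<forall>i\<in>I. \<forall>j\<in>I. bdot (b i) (b j) = (if i = j then 1 else 0))"

lemma orthonormal_onD:
  "orthonormal_on I b \<Longrightarrow> i \<in> I \<Longrightarrow> j \<in> I \<Longrightarrow> bdot (b i) (b j) = (if i = j then 1 else 0)"
  unfolding orthonormal_on_def by blast

lemma orthonormal_on_independent:
  assumes "orthonormal_on Q id"
  shows "vec.independent Q"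
proof
  assume "vec.dependent Q"
  then obtain t u v where t: "finite t" "t \<subseteq> Q" "(\<Sum>w\<in>t. u w *s w) = 0" and v: "v \<in> t" "u v \<noteq> 0"
    unfolding vec.dependent_explicit by blast
  have "0 = bdot v (\<Sum>w\<in>t. u w *s w)" using t(3) by simp
  also have "\<dots> = (\<Sum>w\<in>t. if w = v then u w else 0)"
    unfolding bdot_sum_right bdot_scale_right
    using orthonormal_onD[OF assms, of v] t(2) v(1) by (intro sum.cong) (auto simp: subset_iff)
  also have "\<dots> = u v" using t(1) v(1) by simp
  finally show False using v(2) by simp
qed

lemma orthonormal_on_finite: "orthonormal_on Q id \<Longrightarrow> finite Q"
  using vec.independent_bound_general orthonormal_on_independent by blast

lemma orthonormal_on_projection:
  assumes "orthonormal_on I b" "finite I" "i \<in> I"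
  shows "bdot (b i) (x - (\<Sum>j\<in>I. bdot (b j) x *s b j)) = 0"
proof -
  have "bdot (b i) (\<Sum>j\<in>I. bdot (b j) x *s b j) = (\<Sum>j\<in>I. if j = i then bdot (b j) x else 0)"
    unfolding bdot_sum_right bdot_scale_right
    using orthonormal_onD[OF assms(1) assms(3)] by (intro sum.cong) auto
  then show ?thesis using assms(2,3) by (simp add: bdot_diff_right)
qed

lemma orthonormal_on_Un:
  assumes "orthonormal_on Q1 id" "orthonormal_on Q2 id" "\<And>p q. p \<in> Q1 \<Longrightarrow> q \<in> Q2 \<Longrightarrow> bdot p q = 0"
  shows "orthonormal_on (Q1 \<union> Q2) id"
  using assms unfolding orthonormal_on_def
  by (metis Un_iff bdot_commute id_apply zero_neq_one)

lemma orthonormal_on_update: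
  assumes "orthonormal_on I b" "bdot v v = 1" "\<forall>i\<in>I. bdot (b i) v = 0"
  shows "orthonormal_on (insert j I) (b(j := v))"
  using assms unfolding orthonormal_on_def by (auto simp: bdot_commute)

lemma orthonormal_on_exists_orthogonal_unit:
  fixes b :: "'n \<Rightarrow> complex^'n"
  assumes ON: "orthonormal_on I b" and ne: "I \<noteq> UNIV"
  shows "\<exists>v. bdot v v = 1 \<and> (\<forall>i\<in>I. bdot (b i) v = 0)"
proof -
  define pr where "pr x = x - (\<Sum>j\<in>I. bdot (b j) x *s b j)" for x
  have pr_perp: "pr x \<in> perp_in UNIV (b ` I)" for x
    unfolding perp_in_def pr_def using orthonormal_on_projection[OF ON] by auto
  have "card (b ` I) < CARD('n)"
    using ne card_image_le[of I b] psubset_card_mono[of UNIV I] by fastforce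
  have "vec.span (b ` I) \<noteq> UNIV"
  proof
    assume "vec.span (b ` I) = UNIV"
    then have "vec.dim (UNIV :: (complex^'n) set) \<le> card (b ` I)"
      by (intro vec.dim_le_card) auto
    then show False using \<open>card (b ` I) < CARD('n)\<close> vec_dim_card[where 'a=complex and 'n='n]
      by linarith
  qed
  then obtain e where e: "e \<notin> vec.span (b ` I)" by blast
  have "(\<Sum>j\<in>I. bdot (b j) e *s b j) \<in> vec.span (b ` I)"
    by (intro vec.span_sum vec.span_scale vec.span_base) simp
  then have "pr e \<noteq> 0" using e unfolding pr_def by auto
  then obtain m where m: "pr e $ m \<noteq> 0" by (metis vec_eq_iff zero_index)
  have "bdot (pr e) (pr (axis m 1)) = bdot (pr e) (axis m 1)"
    using pr_perp[of e] unfolding pr_def perp_in_def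
    by (simp add: bdot_diff_right bdot_sum_right bdot_scale_right bdot_commute[of "b _"])
  then have "bdot (pr e) (pr (axis m 1)) \<noteq> 0" using m by (simp add: bdot_axis)
  then obtain v where "v \<in> perp_in UNIV (b ` I)" "bdot v v = 1"
    using subspace_has_unit_vector[OF subspace_perp_in[OF vec.subspace_UNIV] pr_perp pr_perp] by blast
  then show ?thesis unfolding perp_in_def by blast
qed

lemma orthonormal_on_extend:
  fixes b :: "'n \<Rightarrow> complex^'n"
  shows "orthonormal_on I b \<Longrightarrow> \<exists>b'. (\<forall>i\<in>I. b' i = b i) \<and> orthonormal_on UNIV b'"
proof (induction "card (UNIV - I)" arbitrary: b I rule: less_induct)
  case less
  show ?case
  proof (cases "I = UNIV")
    case True
    then show ?thesis using less.prems by blast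
  next
    case False
    then obtain j where j: "j \<notin> I" by blast
    obtain v where v: "bdot v v = 1" "\<forall>i\<in>I. bdot (b i) v = 0"
      using orthonormal_on_exists_orthogonal_unit[OF less.prems False] by blast
    have "card (UNIV - insert j I) < card (UNIV - I)"
      by (rule psubset_card_mono) (use j in auto)
    then obtain b' where b': "\<forall>i\<in>insert j I. b' i = (b(j := v)) i" "orthonormal_on UNIV b'"
      using less.hyps orthonormal_on_update[OF less.prems v] by blast
    have "\<forall>i\<in>I. b' i = b i" using b'(1) j by (metis fun_upd_other insertCI)
    then show ?thesis using b'(2) by blast
  qed
qed

definition eigenvectors :: "complex^'n^'n \<Rightarrow> (complex^'n) set" where
  "eigenvectors f = {v. \<exists>\<mu>. f *v v = \<mu> *s v}"

definition spanned_by_eigenvectors :: "complex^'n^'n \<Rightarrow> bool" where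
  "spanned_by_eigenvectors f \<longleftrightarrow> vec.span (eigenvectors f) = UNIV"

lemma span_eigenvectors_decompose:
  assumes "x \<in> vec.span (eigenvectors f)"
  obtains L v where "finite L" "\<And>l. l \<in> L \<Longrightarrow> f *v v l = l *s v l" "x = (\<Sum>l\<in>L. v l)"
proof -
  obtain t u where t: "finite t" "t \<subseteq> eigenvectors f" and x: "x = (\<Sum>w\<in>t. u w *s w)"
    using assms unfolding vec.span_explicit by blast
  define ev where "ev w = (SOME \<mu>. f *v w = \<mu> *s w)" for w
  have ev: "f *v w = ev w *s w" if "w \<in> t" for w
    using t(2) that unfolding eigenvectors_def ev_def by (auto intro: someI_ex)
  define v where "v l = (\<Sum>w\<in>{w\<in>t. ev w = l}. u w *s w)" for l
  have "f *v v l = l *s v l" for l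
    unfolding v_def vec.sum vec.scale vec.scale_sum_right
    by (intro sum.cong) (auto simp: ev vec.scale_scale mult.commute)
  moreover have "x = (\<Sum>l\<in>ev ` t. v l)"
    unfolding x v_def using t(1) by (simp add: sum.group)
  ultimately show thesis using that t(1) by blast
qed

text \<open>Induction on the number of eigenvalues: applying \<open>f - a\<close> kills the component
  for the eigenvalue \<open>a\<close>.\<close>

lemma invariant_subspace_eigencomponents:
  assumes W: "vec.subspace W" and inv: "\<forall>w\<in>W. f *v w \<in> W" and "finite L"
  shows "(\<And>l. l \<in> L \<Longrightarrow> f *v v l = l *s v l) \<Longrightarrow> (\<Sum>l\<in>L. v l) \<in> W \<Longrightarrow> l \<in> L \<Longrightarrow> v l \<in> W"
  using \<open>finite L\<close>
proof (induction L arbitrary: v l rule: finite_induct)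
  case empty
  then show ?case by simp
next
  case (insert a L)
  let ?s = "\<Sum>l\<in>insert a L. v l"
  have "f *v ?s - a *s ?s = (\<Sum>l\<in>insert a L. (l - a) *s v l)"
    unfolding vec.sum using insert.prems(1)
    by (simp add: vec.scale_sum_right vec.scale_left_diff_distrib sum_subtractf)
  also have "\<dots> = (\<Sum>l\<in>L. (l - a) *s v l)" using insert.hyps by simp
  finally have "(\<Sum>l\<in>L. (l - a) *s v l) \<in> W"
    using vec.subspace_diff[OF W] vec.subspace_scale[OF W] inv insert.prems(2) by metis
  moreover have "f *v ((l - a) *s v l) = l *s ((l - a) *s v l)" if "l \<in> L" for l
  proof -
    have "f *v v l = l *s v l" using insert.prems(1) that by simp
    then show ?thesis by (simp only: vec.scale vec.scale_scale mult.commute)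
  qed
  ultimately have "(l - a) *s v l \<in> W" if "l \<in> L" for l
    using insert.IH[of "\<lambda>l. (l - a) *s v l"] that by blast
  moreover have "v l = (1 / (l - a)) *s ((l - a) *s v l)" if "l \<in> L" for l
  proof -
    have "l - a \<noteq> 0" using that insert.hyps(2) by auto
    then show ?thesis by (simp only: vec.scale_scale) simp
  qed
  ultimately have L: "v l \<in> W" if "l \<in> L" for l
    using vec.subspace_scale[OF W] that by metis
  then have "v a = ?s - (\<Sum>l\<in>L. v l)" "(\<Sum>l\<in>L. v l) \<in> W"
    using insert.hyps W by (simp_all add: vec.subspace_sum)
  then have "v a \<in> W" using vec.subspace_diff[OF W insert.prems(2)] by simp
  then show ?case using L insert.prems(3) by auto
qed

lemma invariant_subspace_span_eigenvectors:
  assumes W: "vec.subspace W" and inv: "\<forall>w\<in>W. f *v w \<in> W" and f: "spanned_by_eigenvectors f"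
  shows "W \<subseteq> vec.span (W \<inter> eigenvectors f)"
proof
  fix x assume x: "x \<in> W"
  obtain L v where L: "finite L" "\<And>l. l \<in> L \<Longrightarrow> f *v v l = l *s v l" "x = (\<Sum>l\<in>L. v l)"
    using span_eigenvectors_decompose[of x f] f unfolding spanned_by_eigenvectors_def by auto
  have "v l \<in> W \<inter> eigenvectors f" if "l \<in> L" for l
    using invariant_subspace_eigencomponents[OF W inv L(1), of v l] L(2,3) x that
    unfolding eigenvectors_def by auto
  then show "x \<in> vec.span (W \<inter> eigenvectors f)"
    unfolding L(3) by (intro vec.span_sum vec.span_base)
qed

definition eigenspace :: "complex^'n^'n \<Rightarrow> complex \<Rightarrow> (complex^'n) set" where
  "eigenspace f \<mu> = {v. f *v v = \<mu> *s v}"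

definition invariant_under :: "(complex^'n^'n) set \<Rightarrow> (complex^'n) set \<Rightarrow> bool" where
  "invariant_under F W \<longleftrightarrow> (\<forall>f\<in>F. \<forall>w\<in>W. f *v w \<in> W)"

definition nondegenerate_on :: "(complex^'n) set \<Rightarrow> bool" where
  "nondegenerate_on W \<longleftrightarrow> (\<forall>w\<in>W. (\<forall>v\<in>W. bdot w v = 0) \<longrightarrow> w = 0)"

definition orthonormal_eigenbasis ::
    "(complex^'n^'n) set \<Rightarrow> (complex^'n) set \<Rightarrow> (complex^'n) set \<Rightarrow> bool" where
  "orthonormal_eigenbasis F W Q \<longleftrightarrow>
     Q \<subseteq> W \<and> orthonormal_on Q id \<and> W \<subseteq> vec.span Q \<and> (\<forall>q\<in>Q. \<forall>f\<in>F. q \<in> eigenvectors f)"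

lemma subspace_dim_psubset:
  assumes "vec.subspace A" "vec.subspace B" "A \<subset> B"
  shows "vec.dim A < vec.dim B"
proof -
  have "vec.span A = A" "vec.span B = B" using assms(1,2) vec.span_eq_iff by blast+
  then show ?thesis using vec.dim_psubset[of A B] assms(3) by argo
qed

lemma subspace_eigenspace: "vec.subspace (eigenspace f \<mu>)"
  unfolding vec.subspace_def eigenspace_def
  by (simp add: vec.add vec.scale vec.scale_right_distrib vec.scale_scale mult.commute)

lemma eigenspace_subset_eigenvectors: "eigenspace f \<mu> \<subseteq> eigenvectors f"
  unfolding eigenspace_def eigenvectors_def by blast

lemma invariant_under_Int:
  "invariant_under F V \<Longrightarrow> invariant_under F W \<Longrightarrow> invariant_under F (V \<inter> W)"
  unfolding invariant_under_def by blast

lemma invariant_under_eigenspace: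
  assumes "\<forall>g\<in>F. f ** g = g ** f"
  shows "invariant_under F (eigenspace f \<mu>)"
  unfolding invariant_under_def eigenspace_def
proof (intro ballI CollectI)
  fix g w assume g: "g \<in> F" and "w \<in> {v. f *v v = \<mu> *s v}"
  have "f ** g = g ** f" using assms g by blast
  then have "f *v (g *v w) = g *v (f *v w)" by (simp add: matrix_vector_mul_assoc)
  also have "\<dots> = \<mu> *s (g *v w)" using \<open>w \<in> {v. f *v v = \<mu> *s v}\<close> by (simp add: vec.scale)
  finally show "f *v (g *v w) = \<mu> *s (g *v w)" .
qed

lemma invariant_under_span_eigenvectors:
  assumes "\<forall>q\<in>Q. \<forall>f\<in>F. q \<in> eigenvectors f"
  shows "invariant_under F (vec.span Q)"
  unfolding invariant_under_def
proof (intro ballI)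
  fix f w assume f: "f \<in> F" and w: "w \<in> vec.span Q"
  have "vec.subspace {w. f *v w \<in> vec.span Q}"
    unfolding vec.subspace_def
    by (auto simp: vec.add vec.scale vec.zero intro: vec.span_add vec.span_scale vec.span_zero)
  moreover have "f *v q \<in> vec.span Q" if "q \<in> Q" for q
  proof -
    have "q \<in> eigenvectors f" using assms f that by blast
    then obtain \<mu> where "f *v q = \<mu> *s q" unfolding eigenvectors_def by blast
    then show ?thesis using that by (simp add: vec.span_base vec.span_scale)
  qed
  ultimately show "f *v w \<in> vec.span Q"
    by (rule vec.span_induct[OF w, of "\<lambda>w. f *v w \<in> vec.span Q"]) simp
qed

lemma subspace_has_nonzero_eigenvector:
  assumes "W \<subseteq> vec.span (W \<inter> eigenvectors f)" "w \<in> W" "w \<noteq> 0"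
  obtains v \<mu> where "v \<in> W" "v \<noteq> 0" "v \<in> eigenspace f \<mu>"
proof -
  have "\<not> W \<inter> eigenvectors f \<subseteq> {0}"
    using assms vec.span_mono[of "W \<inter> eigenvectors f" "{0}"] by (auto simp: vec.span_empty)
  then show thesis using that unfolding eigenvectors_def eigenspace_def by blast
qed

lemma orthonormal_projection_perp_in:
  assumes W: "vec.subspace W" and Q: "Q \<subseteq> W" "orthonormal_on Q id" and x: "x \<in> W"
  obtains p where "p \<in> vec.span Q" "x - p \<in> perp_in W Q"
proof
  let ?p = "\<Sum>q\<in>Q. bdot q x *s q"
  show "?p \<in> vec.span Q" by (intro vec.span_sum vec.span_scale vec.span_base)
  then have "?p \<in> W" using vec.span_minimal[OF Q(1) W] by blast
  then show "x - ?p \<in> perp_in W Q"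
    using orthonormal_on_projection[OF Q(2) orthonormal_on_finite[OF Q(2)], of _ x]
      vec.subspace_diff[OF W x] unfolding perp_in_def by auto
qed

lemma invariant_under_perp_in:
  assumes sym: "\<forall>f\<in>F. transpose f = f" and "invariant_under F W" "invariant_under F (vec.span Q)"
  shows "invariant_under F (perp_in W Q)"
  unfolding invariant_under_def
proof (intro ballI)
  fix f v assume f: "f \<in> F" and v: "v \<in> perp_in W Q"
  have fq: "f *v q \<in> vec.span Q" if "q \<in> Q" for q
    using assms(3) f vec.span_base[OF that] unfolding invariant_under_def by blast
  have vQ: "bdot v s = 0" if "s \<in> Q" for s
    using v that unfolding perp_in_def by (simp add: bdot_commute)
  have "bdot q (f *v v) = 0" if q: "q \<in> Q" for q
  proof -
    have "transpose f = f" using sym f by blast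
    then have "bdot q (f *v v) = bdot v (f *v q)"
      using bdot_matrix_vector_mult[of f v q] bdot_commute[of q] by simp
    also have "\<dots> = 0" using bdot_span_eq_0[OF fq[OF q] vQ] .
    finally show ?thesis .
  qed
  then show "f *v v \<in> perp_in W Q"
    using assms(2) f v unfolding invariant_under_def perp_in_def by blast
qed

lemma nondegenerate_on_perp_in:
  assumes W: "vec.subspace W" "nondegenerate_on W" and Q: "Q \<subseteq> W" "orthonormal_on Q id"
  shows "nondegenerate_on (perp_in W Q)"
  unfolding nondegenerate_on_def
proof (intro ballI impI)
  fix w assume w: "w \<in> perp_in W Q" and perp: "\<forall>v\<in>perp_in W Q. bdot w v = 0"
  have "bdot w x = 0" if x: "x \<in> W" for x
  proof -
    obtain p where p: "p \<in> vec.span Q" "x - p \<in> perp_in W Q"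
      using orthonormal_projection_perp_in[OF W(1) Q x] .
    have "bdot w p = 0"
      using w by (intro bdot_span_eq_0[OF p(1)]) (simp add: perp_in_def bdot_commute)
    moreover have "bdot w (x - p) = 0" using perp p(2) by blast
    ultimately show ?thesis by (simp add: bdot_diff_right)
  qed
  then show "w = 0" using W(2) w unfolding nondegenerate_on_def perp_in_def by blast
qed

text \<open>Eigenspaces of a symmetric \<open>f\<close> for distinct eigenvalues are orthogonal, since
  \<open>\<mu> * bdot w s = bdot (f *v w) s = bdot w (f *v s) = l * bdot w s\<close>.\<close>

lemma nondegenerate_on_eigenspace:
  assumes f: "transpose f = f" and W: "nondegenerate_on W" "W \<subseteq> vec.span (W \<inter> eigenvectors f)"
  shows "nondegenerate_on (W \<inter> eigenspace f \<mu>)"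
  unfolding nondegenerate_on_def
proof (intro ballI impI)
  fix w assume w: "w \<in> W \<inter> eigenspace f \<mu>" and perp: "\<forall>v\<in>W \<inter> eigenspace f \<mu>. bdot w v = 0"
  have "bdot w s = 0" if s: "s \<in> W \<inter> eigenvectors f" for s
  proof -
    obtain l where fs: "f *v s = l *s s" using s unfolding eigenvectors_def by blast
    have "\<mu> * bdot w s = l * bdot w s"
      using w fs bdot_matrix_vector_mult[of f w s] f
      by (simp add: eigenspace_def bdot_scale_left bdot_scale_right)
    then show ?thesis
      using perp s fs by (cases "l = \<mu>") (auto simp: eigenspace_def)
  qed
  then have "bdot w u = 0" if "u \<in> W" for u
    using W(2) that bdot_span_eq_0[of u "W \<inter> eigenvectors f" w] by blast
  then show "w = 0" using W(1) w unfolding nondegenerate_on_def by blast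
qed

lemma orthonormal_eigenbasis_Un:
  assumes W: "vec.subspace W"
    and Q1: "Q1 \<subseteq> W" "orthonormal_on Q1 id" "\<forall>q\<in>Q1. \<forall>f\<in>F. q \<in> eigenvectors f"
    and Q2: "orthonormal_eigenbasis F (perp_in W Q1) Q2"
  shows "orthonormal_eigenbasis F W (Q1 \<union> Q2)"
proof -
  have Q2': "Q2 \<subseteq> perp_in W Q1" "orthonormal_on Q2 id" "perp_in W Q1 \<subseteq> vec.span Q2"
    "\<forall>q\<in>Q2. \<forall>f\<in>F. q \<in> eigenvectors f"
    using Q2 unfolding orthonormal_eigenbasis_def by auto
  have "bdot p q = 0" if "p \<in> Q1" "q \<in> Q2" for p q
    using Q2'(1) that unfolding perp_in_def by blast
  then have "orthonormal_on (Q1 \<union> Q2) id" by (rule orthonormal_on_Un[OF Q1(2) Q2'(2)])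
  moreover have "W \<subseteq> vec.span (Q1 \<union> Q2)"
  proof
    fix x assume "x \<in> W"
    then obtain p where p: "p \<in> vec.span Q1" "x - p \<in> perp_in W Q1"
      using orthonormal_projection_perp_in[OF W Q1(1,2)] by blast
    then have "p + (x - p) \<in> vec.span (Q1 \<union> Q2)"
      using Q2'(3) vec.span_mono[of Q1 "Q1 \<union> Q2"] vec.span_mono[of Q2 "Q1 \<union> Q2"]
      by (intro vec.span_add) blast+
    then show "x \<in> vec.span (Q1 \<union> Q2)" by simp
  qed
  moreover have "Q2 \<subseteq> W" using Q2'(1) unfolding perp_in_def by blast
  ultimately show ?thesis
    using Q1(1,3) Q2'(4) unfolding orthonormal_eigenbasis_def by blast
qed

text \<open>If some \<open>f \<in> F\<close> has a proper nonzero eigenspace in \<open>W\<close>, that eigenspace is a smaller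
  space of the same kind; otherwise every vector of \<open>W\<close> is a common eigenvector, and any unit
  vector will do.\<close>

lemma orthonormal_common_eigenvectors_nonempty:
  assumes sym: "\<forall>f\<in>F. transpose f = f" and comm: "\<forall>f\<in>F. \<forall>g\<in>F. f ** g = g ** f"
    and spanned: "\<forall>f\<in>F. spanned_by_eigenvectors f"
    and W: "vec.subspace W" "nondegenerate_on W" "invariant_under F W" "w \<in> W" "w \<noteq> 0"
    and IH: "\<And>W'. W' \<subset> W \<Longrightarrow> vec.subspace W' \<Longrightarrow> nondegenerate_on W' \<Longrightarrow> invariant_under F W'
               \<Longrightarrow> \<exists>Q. orthonormal_eigenbasis F W' Q"
  shows "\<exists>Q. Q \<subseteq> W \<and> Q \<noteq> {} \<and> orthonormal_on Q id \<and> (\<forall>q\<in>Q. \<forall>f\<in>F. q \<in> eigenvectors f)"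
proof -
  have res: "W \<subseteq> vec.span (W \<inter> eigenvectors f)" if "f \<in> F" for f
    using W(1,3) that spanned invariant_subspace_span_eigenvectors
    unfolding invariant_under_def by blast
  show ?thesis
  proof (cases "\<exists>f\<in>F. \<exists>\<mu>. \<exists>v\<in>W \<inter> eigenspace f \<mu>. v \<noteq> 0 \<and> \<not> W \<subseteq> eigenspace f \<mu>")
    case True
    then obtain f \<mu> v where f: "f \<in> F" and v: "v \<in> W \<inter> eigenspace f \<mu>" "v \<noteq> 0"
      and proper: "\<not> W \<subseteq> eigenspace f \<mu>" by blast
    have "W \<inter> eigenspace f \<mu> \<subset> W" using proper by blast
    moreover have "nondegenerate_on (W \<inter> eigenspace f \<mu>)"
      using nondegenerate_on_eigenspace[OF _ W(2) res[OF f]] sym f by blast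
    moreover have "invariant_under F (W \<inter> eigenspace f \<mu>)"
      using comm f by (intro invariant_under_Int[OF W(3)] invariant_under_eigenspace) blast
    ultimately obtain Q where Q: "orthonormal_eigenbasis F (W \<inter> eigenspace f \<mu>) Q"
      using IH vec.subspace_inter[OF W(1) subspace_eigenspace] by blast
    have "Q \<noteq> {}" using Q v unfolding orthonormal_eigenbasis_def by (auto simp: vec.span_empty)
    then show ?thesis using Q unfolding orthonormal_eigenbasis_def by blast
  next
    case False
    have "W \<subseteq> eigenvectors f" if f: "f \<in> F" for f
    proof -
      obtain v \<mu> where "v \<in> W" "v \<noteq> 0" "v \<in> eigenspace f \<mu>"
        using subspace_has_nonzero_eigenvector[OF res[OF f] W(4,5)] .
      then have "W \<subseteq> eigenspace f \<mu>" using False f by blast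
      then show ?thesis using eigenspace_subset_eigenvectors by blast
    qed
    moreover obtain v where "v \<in> W" "bdot w v \<noteq> 0"
      using W(2,4,5) unfolding nondegenerate_on_def by blast
    then obtain q where "q \<in> W" "bdot q q = 1"
      using subspace_has_unit_vector[OF W(1,4)] by blast
    moreover have "orthonormal_on {q} id" using \<open>bdot q q = 1\<close> by (simp add: orthonormal_on_def)
    ultimately show ?thesis by (intro exI[of _ "{q}"]) blast
  qed
qed

lemma orthonormal_eigenbasis_exists:
  assumes sym: "\<forall>f\<in>F. transpose f = f" and "\<forall>f\<in>F. \<forall>g\<in>F. f ** g = g ** f"
    and "\<forall>f\<in>F. spanned_by_eigenvectors f"
  shows "vec.subspace W \<Longrightarrow> nondegenerate_on W \<Longrightarrow> invariant_under F W
    \<Longrightarrow> \<exists>Q. orthonormal_eigenbasis F W Q"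
proof (induction "vec.dim W" arbitrary: W rule: less_induct)
  case less
  show ?case
  proof (cases "W \<subseteq> {0}")
    case True
    then have "orthonormal_eigenbasis F W {}"
      by (auto simp: orthonormal_eigenbasis_def orthonormal_on_def vec.span_empty)
    then show ?thesis by blast
  next
    case False
    then obtain w where w: "w \<in> W" "w \<noteq> 0" by blast
    have IH: "\<exists>Q. orthonormal_eigenbasis F W' Q"
      if "W' \<subset> W" "vec.subspace W'" "nondegenerate_on W'" "invariant_under F W'" for W'
      using less.hyps[OF subspace_dim_psubset[OF that(2) less.prems(1) that(1)] that(2-4)] .
    obtain Q1 where Q1: "Q1 \<subseteq> W" "Q1 \<noteq> {}" "orthonormal_on Q1 id"
      "\<forall>q\<in>Q1. \<forall>f\<in>F. q \<in> eigenvectors f"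
      using orthonormal_common_eigenvectors_nonempty[OF assms less.prems w IH] by blast
    obtain q where q: "q \<in> Q1" using Q1(2) by blast
    have "bdot q q \<noteq> 0" using orthonormal_onD[OF Q1(3) q q] by simp
    then have "q \<in> W - perp_in W Q1" using q Q1(1) unfolding perp_in_def by blast
    then have proper: "perp_in W Q1 \<subset> W" unfolding perp_in_def by blast
    obtain Q2 where "orthonormal_eigenbasis F (perp_in W Q1) Q2"
      using IH[OF proper subspace_perp_in[OF less.prems(1)]
          nondegenerate_on_perp_in[OF less.prems(1,2) Q1(1,3)]
          invariant_under_perp_in[OF sym less.prems(3) invariant_under_span_eigenvectors[OF Q1(4)]]]
      by blast
    then show ?thesis using orthonormal_eigenbasis_Un[OF less.prems(1) Q1(1,3,4)] by blast
  qed
qed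

lemma commuting_symmetric_orthonormal_eigenbasis:
  fixes F :: "(complex^'n^'n) set"
  assumes "\<forall>f\<in>F. transpose f = f" and "\<forall>f\<in>F. \<forall>g\<in>F. f ** g = g ** f"
    and "\<forall>f\<in>F. spanned_by_eigenvectors f"
  obtains C :: "complex^'n^'n" where "orthonormal_on UNIV (($) C)" "vec.span (range (($) C)) = UNIV"
    "\<And>i f. f \<in> F \<Longrightarrow> C$i \<in> eigenvectors f"
proof -
  have "nondegenerate_on (UNIV :: (complex^'n) set)"
    using bdot_nondegenerate unfolding nondegenerate_on_def by blast
  then obtain Q where "orthonormal_eigenbasis F UNIV Q"
    using orthonormal_eigenbasis_exists[OF assms vec.subspace_UNIV] unfolding invariant_under_def by blast
  then have Q: "orthonormal_on Q id" "vec.span Q = UNIV" "\<forall>q\<in>Q. \<forall>f\<in>F. q \<in> eigenvectors f"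
    unfolding orthonormal_eigenbasis_def by auto
  have "card Q = CARD('n)"
    using vec.dim_span_eq_card_independent[OF orthonormal_on_independent[OF Q(1)]] Q(2)
      vec_dim_card[where 'a=complex and 'n='n] by simp
  then obtain h where h: "bij_betw h (UNIV :: 'n set) Q"
    using finite_same_card_bij[of "UNIV :: 'n set" Q] orthonormal_on_finite[OF Q(1)] by auto
  define C :: "complex^'n^'n" where "C = (\<chi> i. h i)"
  have C: "($) C = h" unfolding C_def by auto
  have "orthonormal_on UNIV (($) C)"
    using Q(1) h unfolding C orthonormal_on_def bij_betw_def inj_on_def by auto
  moreover have "vec.span (range (($) C)) = UNIV"
    using Q(2) h unfolding C bij_betw_def by simp
  moreover have "C$i \<in> eigenvectors f" if "f \<in> F" for i f
    using Q(3) h that unfolding C bij_betw_def by blast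
  ultimately show thesis using that by blast
qed

lemma row_eq_nth: "row i A = A$i"
  unfolding row_def by (simp add: vec_eq_iff)

lemma orthonormal_rows_iff: "orthonormal_on UNIV (($) C) \<longleftrightarrow> C ** transpose C = mat 1"
  unfolding orthonormal_on_def vec_eq_iff matrix_mul_transpose_component by (simp add: mat_def)

lemma corth_iff_orthonormal_rows: "corth C \<longleftrightarrow> orthonormal_on UNIV (($) C)"
  unfolding corth_def orthonormal_rows_iff using matrix_left_right_inverse by blast

lemma corth_expansion:
  assumes "corth C"
  shows "x = (\<Sum>i\<in>UNIV. bdot (C$i) x *s C$i)"
proof -
  have "x = transpose C *v (C *v x)"
    using assms unfolding corth_def by (simp add: matrix_vector_mul_assoc)
  also have "\<dots> = (\<Sum>i\<in>UNIV. bdot (C$i) x *s C$i)"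
    by (subst matrix_mult_sum) (simp add: matrix_vector_mult_component row_eq_nth)
  finally show ?thesis .
qed

lemma matrix_inv_mult:
  assumes "invertible P"
  shows "P ** matrix_inv P = mat 1" "matrix_inv P ** P = mat 1"
  using someI_ex[OF assms[unfolded invertible_def]] unfolding matrix_inv_def by auto

lemma matrix_inv_unique:
  fixes P :: "complex^'n^'n"
  assumes "P ** X = mat 1" "X ** P = mat 1"
  shows "matrix_inv P = X"
proof -
  have "invertible P" unfolding invertible_def using assms by blast
  then have "matrix_inv P = (matrix_inv P ** P) ** X"
    using assms(1) by (simp add: matrix_mul_assoc[symmetric])
  then show ?thesis using matrix_inv_mult(2)[OF \<open>invertible P\<close>] by simp
qed

lemma diagonalizable_spanned_by_eigenvectors:
  fixes M :: "complex^'n^'n"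
  assumes "diagonalizable M"
  shows "spanned_by_eigenvectors M"
proof -
  obtain P :: "complex^'n^'n" where P: "invertible P" "is_diag_mat (matrix_inv P ** M ** P)"
    using assms unfolding diagonalizable_def by blast
  define D where "D = matrix_inv P ** M ** P"
  have "M ** P = P ** D"
    unfolding D_def using matrix_inv_mult[OF P(1)] by (simp add: matrix_mul_assoc)
  moreover have "D *v axis j 1 = D$j$j *s axis j 1" for j
    using P(2) unfolding D_def is_diag_mat_def vec_eq_iff matrix_vector_mult_axis
    by (auto simp: axis_def)
  ultimately have "M *v (P *v axis j 1) = D$j$j *s (P *v axis j 1)" for j
    by (metis matrix_vector_mul_assoc vec.scale)
  then have eig: "P *v axis j 1 \<in> eigenvectors M" for j
    unfolding eigenvectors_def by blast
  have "x \<in> vec.span (eigenvectors M)" for x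
  proof -
    have "x = P *v (\<Sum>j\<in>UNIV. (matrix_inv P *v x)$j *s axis j 1)"
      using matrix_inv_mult(1)[OF P(1)] by (simp add: basis_expansion matrix_vector_mul_assoc)
    also have "\<dots> = (\<Sum>j\<in>UNIV. (matrix_inv P *v x)$j *s (P *v axis j 1))"
      by (simp add: vec.sum vec.scale)
    also have "\<dots> \<in> vec.span (eigenvectors M)"
      by (intro vec.span_sum vec.span_scale vec.span_base eig)
    finally show ?thesis .
  qed
  then show ?thesis unfolding spanned_by_eigenvectors_def by blast
qed

lemma row_matrix_mul_in_span_rows: "row i (N ** M) \<in> vec.span (rows M)"
proof -
  have "row i (N ** M) = (\<Sum>j\<in>UNIV. N$i$j *s row j M)"
    unfolding row_eq_nth vec_eq_iff by (simp add: matrix_matrix_mult_def row_def)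
  also have "\<dots> \<in> vec.span (rows M)"
    by (intro vec.span_sum vec.span_scale vec.span_base) (auto simp: rows_def)
  finally show ?thesis .
qed

text \<open>The rows of \<open>M\<^sup>T M\<close> span a subspace of the row space of \<open>M\<close>; equal rank makes the two
  spaces equal, so a vector killed by \<open>M\<^sup>T M\<close> is orthogonal to all rows of \<open>M\<close>.\<close>

lemma rank_eq_gram_kernel:
  fixes M :: "complex^'n^'n"
  assumes rk: "rank M = rank (transpose M ** M)" and v: "(transpose M ** M) *v v = 0"
  shows "M *v v = 0"
proof -
  let ?G = "transpose M ** M"
  have sub: "rows ?G \<subseteq> vec.span (rows M)"
    using row_matrix_mul_in_span_rows unfolding rows_def by blast
  have "vec.dim (vec.span (rows M)) \<le> vec.dim (rows ?G)"
    using rk unfolding row_rank_def_gen vec.dim_span by simp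
  then have span_eq: "vec.span (rows ?G) = vec.span (rows M)"
    using vec.dim_eq_span[OF sub] by simp
  have "bdot v s = 0" if s: "s \<in> rows ?G" for s
  proof -
    obtain i where "s = ?G$i" using s unfolding rows_def row_eq_nth by blast
    then have "bdot s v = (?G *v v)$i" by (simp add: matrix_vector_mult_component)
    then show ?thesis using v by (simp add: bdot_commute)
  qed
  then have "bdot v (M$j) = 0" for j
    using bdot_span_eq_0[of "M$j" "rows ?G" v] vec.span_base[of "M$j" "rows M"] span_eq
    unfolding rows_def row_eq_nth by blast
  then show ?thesis
    unfolding vec_eq_iff matrix_vector_mult_component by (simp add: bdot_commute)
qed

lemma slice_condD:
  assumes "slice_cond M"
  shows "diagonalizable (transpose (M k) ** M k)"
    and "rank (M k) = rank (transpose (M k) ** M k)"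
    and "transpose (transpose (M k) ** M l) = transpose (M k) ** M l"
    and "transpose (M k) ** M l = transpose (M l) ** M k"
    and "M k ** transpose (M l) = M l ** transpose (M k)"
proof -
  show "diagonalizable (transpose (M k) ** M k)" "rank (M k) = rank (transpose (M k) ** M k)"
    "transpose (transpose (M k) ** M l) = transpose (M k) ** M l"
    using assms unfolding slice_cond_def by auto
  then show "transpose (M k) ** M l = transpose (M l) ** M k"
    by (metis matrix_transpose_mul transpose_transpose)
  have "transpose (M k ** transpose (M l)) = M k ** transpose (M l)"
    using assms unfolding slice_cond_def by auto
  then show "M k ** transpose (M l) = M l ** transpose (M k)"
    by (metis matrix_transpose_mul transpose_transpose)
qed

lemma slice_cond_gram_mult:
  assumes "slice_cond M"
  shows "(transpose (M a) ** M b) ** (transpose (M c) ** M d)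
       = (transpose (M a) ** M c) ** (transpose (M b) ** M d)"
proof -
  have "(transpose (M a) ** M b) ** (transpose (M c) ** M d)
      = transpose (M a) ** (M b ** transpose (M c)) ** M d"
    by (simp add: matrix_mul_assoc)
  also have "\<dots> = transpose (M a) ** (M c ** transpose (M b)) ** M d"
    unfolding slice_condD(5)[OF assms, of b c] ..
  finally show ?thesis by (simp add: matrix_mul_assoc)
qed

lemma slice_cond_gram_commute:
  assumes "slice_cond M"
  shows "(transpose (M a) ** M b) ** (transpose (M c) ** M d)
       = (transpose (M c) ** M d) ** (transpose (M a) ** M b)"
  unfolding slice_cond_gram_mult[OF assms, of a b c d] slice_cond_gram_mult[OF assms, of c d a b]
    slice_condD(4)[OF assms, of c a] slice_condD(4)[OF assms, of d b] ..

lemma slice_cond_mult_gram: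
  assumes "slice_cond M"
  shows "M a ** (transpose (M a) ** M b) = M b ** (transpose (M a) ** M a)"
proof -
  have "M a ** (transpose (M a) ** M b) = (M a ** transpose (M b)) ** M a"
    unfolding slice_condD(4)[OF assms, of a b] by (simp add: matrix_mul_assoc)
  also have "\<dots> = M b ** (transpose (M a) ** M a)"
    unfolding slice_condD(5)[OF assms, of a b] by (simp add: matrix_mul_assoc)
  finally show ?thesis .
qed

lemma slice_cond_gram_kernel:
  "slice_cond M \<Longrightarrow> (transpose (M k) ** M k) *v v = 0 \<Longrightarrow> M k *v v = 0"
  using rank_eq_gram_kernel slice_condD(2) by blast

text \<open>If \<open>S\<^sup>2 q = r\<^sup>2 q\<close> with \<open>r \<noteq> 0\<close>, then \<open>q\<close> is the mean of the eigenvectors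
  \<open>q \<plusminus> S q / r\<close> (eigenvalues \<open>\<plusminus>r\<close>).\<close>

lemma square_eigenvector_in_span_eigenvectors:
  assumes S: "S *v (S *v q) = (r * r) *s q" and r: "r \<noteq> 0"
  shows "q \<in> vec.span (eigenvectors S)"
proof -
  define u1 where "u1 = q + (1 / r) *s (S *v q)"
  define u2 where "u2 = q - (1 / r) *s (S *v q)"
  have "S *v u1 = r *s u1" "S *v u2 = (- r) *s u2"
    unfolding u1_def u2_def vec.add vec.diff vec.scale S using r
    by (simp_all add: vec_eq_iff field_simps)
  then have "u1 \<in> eigenvectors S" "u2 \<in> eigenvectors S"
    unfolding eigenvectors_def by blast+
  then have "(1/2) *s u1 + (1/2) *s u2 \<in> vec.span (eigenvectors S)"
    by (intro vec.span_add vec.span_scale vec.span_base)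
  moreover have "q = (1/2) *s u1 + (1/2) *s u2"
    unfolding u1_def u2_def by (simp add: vec_eq_iff field_simps)
  ultimately show ?thesis by simp
qed

text \<open>The matrices \<open>M\<^sub>k\<^sup>T M\<^sub>k\<close> are symmetric, commuting and diagonalisable, so they have a
  common orthonormal eigenbasis. On a basis vector \<open>q\<close> with eigenvalues \<open>\<mu>\<^sub>a, \<mu>\<^sub>b\<close>, either
  \<open>M\<^sub>a\<^sup>T M\<^sub>b q = 0\<close> (the rank condition) or \<open>(M\<^sub>a\<^sup>T M\<^sub>b)\<^sup>2 q = \<mu>\<^sub>a \<mu>\<^sub>b q\<close>.\<close>

lemma slice_cond_spanned_by_eigenvectors:
  fixes M :: "'n \<Rightarrow> complex^'n^'n"
  assumes sc: "slice_cond M"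
  shows "spanned_by_eigenvectors (transpose (M a) ** M b)"
proof -
  let ?S = "transpose (M a) ** M b"
  define F :: "(complex^'n^'n) set" where "F = range (\<lambda>k. transpose (M k) ** M k)"
  have F: "\<forall>f\<in>F. transpose f = f" "\<forall>f\<in>F. \<forall>g\<in>F. f ** g = g ** f"
    "\<forall>f\<in>F. spanned_by_eigenvectors f"
    unfolding F_def using slice_condD(1,3)[OF sc] slice_cond_gram_commute[OF sc]
    by (auto intro: diagonalizable_spanned_by_eigenvectors)
  obtain C :: "complex^'n^'n" where "orthonormal_on UNIV (($) C)"
    and C: "vec.span (range (($) C)) = UNIV" "\<And>i f. f \<in> F \<Longrightarrow> C$i \<in> eigenvectors f"
    by (rule commuting_symmetric_orthonormal_eigenbasis[OF F]) (rule that)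
  have "C$i \<in> vec.span (eigenvectors ?S)" for i
  proof -
    obtain \<mu>a \<mu>b where \<mu>a: "(transpose (M a) ** M a) *v C$i = \<mu>a *s C$i"
      and \<mu>b: "(transpose (M b) ** M b) *v C$i = \<mu>b *s C$i"
      using C(2)[of "transpose (M a) ** M a" i] C(2)[of "transpose (M b) ** M b" i]
      unfolding F_def eigenvectors_def by blast
    show ?thesis
    proof (cases "\<mu>a = 0 \<or> \<mu>b = 0")
      case True
      then have "M a *v C$i = 0 \<or> M b *v C$i = 0"
        using slice_cond_gram_kernel[OF sc] \<mu>a \<mu>b by auto
      then have "?S *v C$i = 0 *s C$i"
      proof
        assume "M a *v C$i = 0"
        then show ?thesis
          unfolding slice_condD(4)[OF sc, of a b] by (simp flip: matrix_vector_mul_assoc)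
      qed (simp flip: matrix_vector_mul_assoc)
      then show ?thesis
        unfolding eigenvectors_def by (intro vec.span_base) blast
    next
      case False
      have "?S *v (?S *v C$i) = (?S ** ?S) *v C$i" by (simp add: matrix_vector_mul_assoc)
      also have "\<dots> = (transpose (M a) ** M a) *v ((transpose (M b) ** M b) *v C$i)"
        unfolding slice_cond_gram_mult[OF sc, of a b a b] by (simp add: matrix_vector_mul_assoc)
      also have "\<dots> = (csqrt (\<mu>a * \<mu>b) * csqrt (\<mu>a * \<mu>b)) *s C$i"
        unfolding \<mu>a \<mu>b vec.scale by (simp add: power2_eq_square[symmetric] mult.commute)
      finally show ?thesis
        using False by (intro square_eigenvector_in_span_eigenvectors) auto
    qed
  qed
  then have "vec.span (range (($) C)) \<subseteq> vec.span (eigenvectors ?S)"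
    by (intro vec.span_minimal vec.subspace_span) auto
  then show ?thesis unfolding spanned_by_eigenvectors_def C(1) by blast
qed

lemma bdot_mult_eigenvector_eq_0:
  assumes "c' \<in> eigenvectors (transpose A ** B)" "bdot c c' = 0"
  shows "bdot (A *v c) (B *v c') = 0"
proof -
  obtain \<sigma> where "(transpose A ** B) *v c' = \<sigma> *s c'" using assms(1) unfolding eigenvectors_def by blast
  then have "bdot (A *v c) (B *v c') = \<sigma> * bdot c c'"
    by (simp add: bdot_matrix_vector_mult bdot_scale_right matrix_vector_mul_assoc del: transpose_matrix_vector)
  then show ?thesis using assms(2) by simp
qed

text \<open>\<open>u = M\<^sub>k c - (\<sigma>/\<mu>) M\<^sub>k\<^sub>0 c\<close> lies in the kernel of \<open>M\<^sub>k\<^sub>0\<^sup>T\<close> and is an eigenvector of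
  \<open>M\<^sub>k\<^sub>0 M\<^sub>k\<^sub>0\<^sup>T\<close> for the nonzero eigenvalue \<open>\<mu>\<close>, hence \<open>u = 0\<close>.\<close>

lemma slice_cond_images_parallel:
  assumes sc: "slice_cond M"
    and \<mu>: "(transpose (M k0) ** M k0) *v c = \<mu> *s c" "\<mu> \<noteq> 0"
    and \<sigma>: "(transpose (M k0) ** M k) *v c = \<sigma> *s c"
  shows "M k *v c = (\<sigma> / \<mu>) *s (M k0 *v c)"
proof -
  define u where "u = M k *v c - (\<sigma> / \<mu>) *s (M k0 *v c)"
  have "transpose (M k0) *v u = \<sigma> *s c - (\<sigma> / \<mu>) *s (\<mu> *s c)"
    unfolding u_def vec.diff vec.scale \<mu>(1)[symmetric] \<sigma>[symmetric]
    by (simp add: matrix_vector_mul_assoc del: transpose_matrix_vector)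
  then have "transpose (M k0) *v u = 0" using \<mu>(2) by (simp add: vec_eq_iff)
  then have "(M k0 ** transpose (M k0)) *v u = 0"
    by (simp add: matrix_vector_mul_assoc[symmetric] del: transpose_matrix_vector)
  moreover have "(M k0 ** transpose (M k0)) *v (M j *v c) = \<mu> *s (M j *v c)" for j
  proof -
    have "(M k0 ** transpose (M k0)) *v (M j *v c) = (M k0 ** (transpose (M k0) ** M j)) *v c"
      by (simp add: matrix_vector_mul_assoc matrix_mul_assoc)
    also have "\<dots> = M j *v ((transpose (M k0) ** M k0) *v c)"
      by (simp add: slice_cond_mult_gram[OF sc] matrix_vector_mul_assoc)
    finally show ?thesis by (simp add: \<mu>(1) vec.scale)
  qed
  ultimately have "\<mu> *s u = 0"
    unfolding u_def vec.diff vec.scale by (simp add: vec.scale_right_diff_distrib vec.scale_scale mult.commute)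
  then have "u = 0" using \<mu>(2) by simp
  then show ?thesis unfolding u_def by simp
qed

lemma slice_cond_row_image:
  assumes sc: "slice_cond M"
    and c: "\<And>a b. c \<in> eigenvectors (transpose (M a) ** M b)" "bdot c c = 1"
  obtains b d where "\<And>k. M k *v c = d k *s b"
    and "(\<exists>k. M k *v c \<noteq> 0) \<Longrightarrow> bdot b b = 1 \<and> (\<exists>k0 t. b = t *s (M k0 *v c))"
proof (cases "\<exists>k. M k *v c \<noteq> 0")
  case False
  show thesis by (rule that[of "\<lambda>_. 0" 0]) (use False in auto)
next
  case True
  then obtain k0 where k0: "M k0 *v c \<noteq> 0" by blast
  have "\<forall>k. \<exists>s. (transpose (M k0) ** M k) *v c = s *s c"
    using c(1) unfolding eigenvectors_def by blast
  then obtain \<sigma> where \<sigma>: "\<forall>k. (transpose (M k0) ** M k) *v c = \<sigma> k *s c"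
    using choice[of "\<lambda>k s. (transpose (M k0) ** M k) *v c = s *s c"] by blast
  have \<mu>: "\<sigma> k0 \<noteq> 0"
  proof
    assume "\<sigma> k0 = 0"
    then have "(transpose (M k0) ** M k0) *v c = 0" using \<sigma> by simp
    then show False using slice_cond_gram_kernel[OF sc] k0 by blast
  qed
  define t where "t = 1 / csqrt (\<sigma> k0)"
  have tt: "t * t * \<sigma> k0 = 1"
    using \<mu> unfolding t_def by (simp add: power2_eq_square[symmetric] power_divide)
  have "bdot (M k0 *v c) (M k0 *v c) = \<sigma> k0"
    using \<sigma> c(2)
    by (simp add: bdot_matrix_vector_mult bdot_scale_right matrix_vector_mul_assoc del: transpose_matrix_vector)
  then have "bdot (t *s (M k0 *v c)) (t *s (M k0 *v c)) = 1"
    using tt by (simp add: bdot_scale_left bdot_scale_right mult.assoc)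
  moreover have "M k *v c = (\<sigma> k / (\<sigma> k0 * t)) *s (t *s (M k0 *v c))" for k
  proof -
    have "t \<noteq> 0" using tt by auto
    then show ?thesis
      using slice_cond_images_parallel[OF sc \<sigma>[rule_format, of k0] \<mu> \<sigma>[rule_format, of k]]
      by (simp add: vec.scale_scale)
  qed
  ultimately show thesis by (intro that) blast+
qed

lemma slice_cond_row_images:
  fixes M :: "'n \<Rightarrow> complex^'n^'n" and C :: "complex^'n^'n"
  assumes sc: "slice_cond M" and C: "orthonormal_on UNIV (($) C)"
    and CF: "\<And>i a b. C$i \<in> eigenvectors (transpose (M a) ** M b)"
  obtains b d where "\<And>i k. M k *v C$i = d i k *s b i"
    and "orthonormal_on {i. \<exists>k. M k *v C$i \<noteq> 0} b"
proof -
  define nz where "nz = {i. \<exists>k. M k *v C$i \<noteq> 0}"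
  have "\<forall>i. \<exists>b d. (\<forall>k. M k *v C$i = d k *s b) \<and>
      (i \<in> nz \<longrightarrow> bdot b b = 1 \<and> (\<exists>k0 t. b = t *s (M k0 *v C$i)))" (is "\<forall>i. \<exists>b d. ?P i b d")
  proof
    fix i
    have "bdot (C$i) (C$i) = 1" using orthonormal_onD[OF C] by simp
    then obtain b d where "\<And>k. M k *v C$i = d k *s b"
      and "(\<exists>k. M k *v C$i \<noteq> 0) \<Longrightarrow> bdot b b = 1 \<and> (\<exists>k0 t. b = t *s (M k0 *v C$i))"
      by (rule slice_cond_row_image[OF sc CF]) (rule that)
    then show "\<exists>b d. ?P i b d" unfolding nz_def by blast
  qed
  then obtain b d where bd: "\<And>i. ?P i (b i) (d i)" by metis
  have "orthonormal_on nz b"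
    unfolding orthonormal_on_def
  proof (intro ballI)
    fix i j assume i: "i \<in> nz" and j: "j \<in> nz"
    show "bdot (b i) (b j) = (if i = j then 1 else 0)"
    proof (cases "i = j")
      case False
      obtain k t k' t' where "b i = t *s (M k *v C$i)" "b j = t' *s (M k' *v C$j)"
        using bd i j by blast
      moreover have "bdot (M k *v C$i) (M k' *v C$j) = 0"
        using orthonormal_onD[OF C, of i j] False by (intro bdot_mult_eigenvector_eq_0 CF) simp
      ultimately show ?thesis using False by (simp add: bdot_scale_left bdot_scale_right)
    qed (use bd i in simp)
  qed
  then show thesis using that bd unfolding nz_def by blast
qed

lemma slice_cond_decomposition:
  fixes M :: "'n \<Rightarrow> complex^'n^'n"
  assumes sc: "slice_cond M"
  obtains B C W :: "complex^'n^'n" where "corth B" "corth C"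
    "\<And>k j l. M k $ j $ l = (\<Sum>i\<in>UNIV. W$i$k * B$i$j * C$i$l)"
proof -
  define F :: "(complex^'n^'n) set" where "F = {transpose (M a) ** M b | a b. True}"
  have F: "\<forall>f\<in>F. transpose f = f" "\<forall>f\<in>F. \<forall>g\<in>F. f ** g = g ** f"
    "\<forall>f\<in>F. spanned_by_eigenvectors f"
    unfolding F_def
    using slice_condD(3)[OF sc] slice_cond_gram_commute[OF sc] slice_cond_spanned_by_eigenvectors[OF sc]
    by blast+
  obtain C :: "complex^'n^'n" where C: "orthonormal_on UNIV (($) C)"
    and "vec.span (range (($) C)) = UNIV" and CF: "\<And>i f. f \<in> F \<Longrightarrow> C$i \<in> eigenvectors f"
    by (rule commuting_symmetric_orthonormal_eigenbasis[OF F]) (rule that)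
  have "C$i \<in> eigenvectors (transpose (M a) ** M b)" for i a b using CF unfolding F_def by blast
  then obtain b d where bd: "\<And>i k. M k *v C$i = d i k *s b i"
    and ONb: "orthonormal_on {i. \<exists>k. M k *v C$i \<noteq> 0} b"
    by (rule slice_cond_row_images[OF sc C]) (rule that)
  obtain B' where B': "\<forall>i\<in>{i. \<exists>k. M k *v C$i \<noteq> 0}. B' i = b i" "orthonormal_on UNIV B'"
    using orthonormal_on_extend[OF ONb] by blast
  define B :: "complex^'n^'n" where "B = (\<chi> i. B' i)"
  have "($) B = B'" unfolding B_def by auto
  then have "corth B" "corth C"
    using B'(2) C unfolding corth_iff_orthonormal_rows by simp_all
  define W :: "complex^'n^'n" where "W = (\<chi> i k. if \<exists>k. M k *v C$i \<noteq> 0 then d i k else 0)"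
  have MC: "M k *v C$i = W$i$k *s B$i" for k i
    using bd B'(1) unfolding B_def W_def by auto
  have "M k $ j $ l = (\<Sum>i\<in>UNIV. W$i$k * B$i$j * C$i$l)" for k j l
  proof -
    have "bdot (C$i) (M k $ j) = W$i$k * B$i$j" for i
      using MC[of k i] unfolding vec_eq_iff matrix_vector_mult_component by (simp add: bdot_commute)
    then have "M k $ j = (\<Sum>i\<in>UNIV. (W$i$k * B$i$j) *s C$i)"
      using corth_expansion[OF \<open>corth C\<close>, of "M k $ j"] by simp
    then show ?thesis by (simp add: vec_eq_iff)
  qed
  then show thesis using that \<open>corth B\<close> \<open>corth C\<close> by blast
qed

lemma corth_rows_bdot:
  assumes "corth C"
  shows "bdot (C$i) (C$j) = (if i = j then 1 else 0)"
  using assms orthonormal_onD[of UNIV "($) C" i j] unfolding corth_iff_orthonormal_rows by simp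

lemma yslice_decomposed_mult_row:
  fixes T :: "complex^'n^'n^'n" and W B C :: "complex^'n^'n"
  assumes Tf: "\<And>k j l. T$k$j$l = (\<Sum>i\<in>UNIV. W$i$k * B$i$j * C$i$l)" and C: "corth C"
  shows "yslice T a *v C$i = B$i$a *s W$i"
proof -
  have "(yslice T a *v C$i)$p = (\<Sum>i'\<in>UNIV. (W$i'$p * B$i'$a) * bdot (C$i') (C$i))" for p
    unfolding matrix_vector_mult_def yslice_def Tf bdot_def
    by (simp add: sum_distrib_left sum_distrib_right ac_simps) (rule sum.swap)
  then show ?thesis
    unfolding vec_eq_iff corth_rows_bdot[OF C] by (simp add: if_distrib cong: if_cong)
qed

text \<open>The symmetry of \<open>Y\<^sub>a\<^sup>T Y\<^sub>b\<close> on the basis \<open>C\<close> gives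
  \<open>B\<^sub>i\<^sub>a B\<^sub>j\<^sub>b G\<^sub>i\<^sub>j = B\<^sub>j\<^sub>a B\<^sub>i\<^sub>b G\<^sub>i\<^sub>j\<close> for the Gram matrix \<open>G\<close> of the rows of \<open>W\<close>;
  multiplying by \<open>B\<^sub>i\<^sub>a B\<^sub>j\<^sub>b\<close> and summing over \<open>a, b\<close> turns this into \<open>G\<^sub>i\<^sub>j = 0\<close> for \<open>i \<noteq> j\<close>.\<close>

lemma yslice_decomposed_rows_orthogonal:
  fixes T :: "complex^'n^'n^'n" and W B C :: "complex^'n^'n"
  assumes Tf: "\<And>k j l. T$k$j$l = (\<Sum>i\<in>UNIV. W$i$k * B$i$j * C$i$l)"
    and B: "corth B" and C: "corth C" and sc: "slice_cond (yslice T)" and ij: "i \<noteq> j"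
  shows "bdot (W$i) (W$j) = 0"
proof -
  let ?Y = "yslice T"
  define G where "G = bdot (W$i) (W$j)"
  have K: "bdot (C$p) ((transpose (?Y a) ** ?Y b) *v C$q) = B$p$a * B$q$b * bdot (W$p) (W$q)"
    for a b p q
  proof -
    have "bdot (C$p) ((transpose (?Y a) ** ?Y b) *v C$q) = bdot (?Y a *v C$p) (?Y b *v C$q)"
      by (simp add: bdot_matrix_vector_mult matrix_vector_mul_assoc[symmetric] del: transpose_matrix_vector)
    then show ?thesis
      by (simp add: yslice_decomposed_mult_row[OF Tf C] bdot_scale_left bdot_scale_right)
  qed
  have sym: "B$i$a * B$j$b * G = B$j$a * B$i$b * G" for a b
  proof -
    have "bdot (C$i) ((transpose (?Y a) ** ?Y b) *v C$j) = bdot (C$j) ((transpose (?Y a) ** ?Y b) *v C$i)"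
      using bdot_matrix_vector_mult[of "transpose (?Y a) ** ?Y b" "C$i" "C$j"] slice_condD(3)[OF sc, of a b]
      by (simp add: bdot_commute del: transpose_matrix_vector)
    then show ?thesis unfolding K G_def by (simp add: bdot_commute)
  qed
  have sum_prod: "G * sum f UNIV * sum g UNIV = (\<Sum>a\<in>UNIV. \<Sum>b\<in>UNIV. G * f a * g b)"
    for f g :: "'n \<Rightarrow> complex"
    by (simp only: sum_distrib_left[of G] sum_product)
  have "G = G * bdot (B$i) (B$i) * bdot (B$j) (B$j)" using corth_rows_bdot[OF B] by simp
  also have "\<dots> = (\<Sum>a\<in>UNIV. \<Sum>b\<in>UNIV. (B$i$a * B$j$b * G) * (B$i$a * B$j$b))"
    unfolding bdot_def sum_prod by (intro sum.cong refl) (simp only: ac_simps)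
  also have "\<dots> = (\<Sum>a\<in>UNIV. \<Sum>b\<in>UNIV. (B$j$a * B$i$b * G) * (B$i$a * B$j$b))"
    unfolding sym ..
  also have "\<dots> = G * bdot (B$j) (B$i) * bdot (B$i) (B$j)"
    unfolding bdot_def sum_prod by (intro sum.cong refl) (simp only: ac_simps)
  also have "\<dots> = 0" using corth_rows_bdot[OF B] ij by simp
  finally show ?thesis unfolding G_def .
qed

text \<open>An isotropic nonzero row \<open>W\<^sub>i\<close> would be orthogonal to all rows of \<open>W\<close>, hence to the
  range of every \<open>Y\<^sub>a\<close>; then \<open>Y\<^sub>a\<^sup>T Y\<^sub>a C\<^sub>i = 0 \<noteq> Y\<^sub>a C\<^sub>i\<close> for some \<open>a\<close>, contradicting the rank
  condition.\<close>

lemma yslice_decomposed_rows_nonisotropic: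
  fixes T :: "complex^'n^'n^'n" and W B C :: "complex^'n^'n"
  assumes Tf: "\<And>k j l. T$k$j$l = (\<Sum>i\<in>UNIV. W$i$k * B$i$j * C$i$l)"
    and B: "corth B" and C: "corth C" and sc: "slice_cond (yslice T)" and Wi: "W$i \<noteq> 0"
  shows "bdot (W$i) (W$i) \<noteq> 0"
proof
  let ?Y = "yslice T"
  assume iso: "bdot (W$i) (W$i) = 0"
  have "bdot (W$i') (W$i) = 0" for i'
    using iso yslice_decomposed_rows_orthogonal[OF Tf B C sc, of i' i] by (cases "i = i'") auto
  have "\<exists>a. B$i$a \<noteq> 0"
  proof (rule ccontr)
    assume "\<nexists>a. B$i$a \<noteq> 0"
    then have "bdot (B$i) (B$i) = 0" by (simp add: bdot_def)
    then show False using corth_rows_bdot[OF B, of i i] by simp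
  qed
  then obtain a where a: "B$i$a \<noteq> 0" by blast
  have range_perp: "bdot (?Y a *v z) (W$i) = 0" for z
  proof -
    have "?Y a *v z = ?Y a *v (\<Sum>i'\<in>UNIV. bdot (C$i') z *s C$i')"
      using corth_expansion[OF C, of z] by (rule arg_cong)
    also have "\<dots> = (\<Sum>i'\<in>UNIV. bdot (C$i') z *s (B$i'$a *s W$i'))"
      by (simp add: vec.sum vec.scale yslice_decomposed_mult_row[OF Tf C])
    finally have "?Y a *v z = (\<Sum>i'\<in>UNIV. bdot (C$i') z *s (B$i'$a *s W$i'))" .
    then show ?thesis
      using \<open>\<And>i'. bdot (W$i') (W$i) = 0\<close> by (simp add: bdot_sum_left bdot_scale_left)
  qed
  have "transpose (?Y a) *v W$i = 0"
    by (rule bdot_nondegenerate) (metis bdot_commute bdot_matrix_vector_mult range_perp)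
  then have "(transpose (?Y a) ** ?Y a) *v C$i = 0"
    by (simp add: matrix_vector_mul_assoc[symmetric] yslice_decomposed_mult_row[OF Tf C] vec.scale
        del: transpose_matrix_vector)
  then have "?Y a *v C$i = 0" by (rule slice_cond_gram_kernel[OF sc])
  then show False using yslice_decomposed_mult_row[OF Tf C, of a i] a Wi by simp
qed

lemma trilin_eq_decomposed:
  fixes T :: "complex^'n^'n^'n" and A B C :: "complex^'n^'n" and \<alpha> :: "complex^'n"
  assumes Tf: "\<And>k j l. T$k$j$l = (\<Sum>i\<in>UNIV. \<alpha>$i * A$i$k * B$i$j * C$i$l)"
  shows "trilin T x y z = (\<Sum>i\<in>UNIV. \<alpha>$i * (A *v x)$i * (B *v y)$i * (C *v z)$i)"
proof -
  define F where "F i k j l = \<alpha>$i * A$i$k * B$i$j * C$i$l * x$k * y$j * z$l" for i k j l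
  have "trilin T x y z = (\<Sum>k\<in>UNIV. \<Sum>j\<in>UNIV. \<Sum>l\<in>UNIV. \<Sum>i\<in>UNIV. F i k j l)"
    unfolding trilin_def Tf F_def by (simp only: sum_distrib_right)
  also have "\<dots> = (\<Sum>k\<in>UNIV. \<Sum>j\<in>UNIV. \<Sum>i\<in>UNIV. \<Sum>l\<in>UNIV. F i k j l)"
    by (rule sum.cong[OF refl], rule sum.cong[OF refl], rule sum.swap)
  also have "\<dots> = (\<Sum>k\<in>UNIV. \<Sum>i\<in>UNIV. \<Sum>j\<in>UNIV. \<Sum>l\<in>UNIV. F i k j l)"
    by (rule sum.cong[OF refl], rule sum.swap)
  also have "\<dots> = (\<Sum>i\<in>UNIV. \<Sum>k\<in>UNIV. \<Sum>j\<in>UNIV. \<Sum>l\<in>UNIV. F i k j l)"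
    by (rule sum.swap)
  also have "\<dots> = (\<Sum>i\<in>UNIV. \<alpha>$i * (A *v x)$i * (B *v y)$i * (C *v z)$i)"
  proof (rule sum.cong[OF refl])
    fix i
    have "\<alpha>$i * (A *v x)$i * (B *v y)$i * (C *v z)$i
      = \<alpha>$i * (\<Sum>k\<in>UNIV. A$i$k * x$k) * (\<Sum>j\<in>UNIV. B$i$j * y$j) * (\<Sum>l\<in>UNIV. C$i$l * z$l)"
      unfolding matrix_vector_mult_def by simp
    also have "\<dots> = (\<Sum>l\<in>UNIV. \<Sum>j\<in>UNIV. \<Sum>k\<in>UNIV. \<alpha>$i * (A$i$k * x$k) * (B$i$j * y$j) * (C$i$l * z$l))"
      by (simp only: sum_distrib_left sum_distrib_right)
    also have "\<dots> = (\<Sum>l\<in>UNIV. \<Sum>j\<in>UNIV. \<Sum>k\<in>UNIV. F i k j l)"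
      unfolding F_def by (rule sum.cong[OF refl], rule sum.cong[OF refl], rule sum.cong[OF refl]) (simp only: ac_simps)
    also have "\<dots> = (\<Sum>l\<in>UNIV. \<Sum>k\<in>UNIV. \<Sum>j\<in>UNIV. F i k j l)"
      by (rule sum.cong[OF refl], rule sum.swap)
    also have "\<dots> = (\<Sum>k\<in>UNIV. \<Sum>l\<in>UNIV. \<Sum>j\<in>UNIV. F i k j l)"
      by (rule sum.swap)
    also have "\<dots> = (\<Sum>k\<in>UNIV. \<Sum>j\<in>UNIV. \<Sum>l\<in>UNIV. F i k j l)"
      by (rule sum.cong[OF refl], rule sum.swap)
    finally show "(\<Sum>k\<in>UNIV. \<Sum>j\<in>UNIV. \<Sum>l\<in>UNIV. F i k j l) = \<alpha>$i * (A *v x)$i * (B *v y)$i * (C *v z)$i" by simp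
  qed
  finally show ?thesis .
qed

lemma orthogonal_rows_factor:
  fixes W :: "complex^'n^'n"
  assumes orth: "\<And>i j. i \<noteq> j \<Longrightarrow> bdot (W$i) (W$j) = 0"
    and noniso: "\<And>i. W$i \<noteq> 0 \<Longrightarrow> bdot (W$i) (W$i) \<noteq> 0"
  obtains A :: "complex^'n^'n" and \<alpha> :: "complex^'n" where "corth A" "\<And>i k. W$i$k = \<alpha>$i * A$i$k"
proof -
  define nz where "nz = {i. W$i \<noteq> 0}"
  define s where "s i = csqrt (bdot (W$i) (W$i))" for i
  have s: "s i \<noteq> 0" "bdot (W$i) (W$i) / (s i * s i) = 1" if "i \<in> nz" for i
    using noniso that unfolding nz_def s_def by (simp_all add: power2_eq_square[symmetric])
  have "orthonormal_on nz (\<lambda>i. (1 / s i) *s W$i)"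
    unfolding orthonormal_on_def bdot_scale_left bdot_scale_right
    using orth s(2) by (simp add: field_simps)
  then obtain A' where A': "\<forall>i\<in>nz. A' i = (1 / s i) *s W$i" "orthonormal_on UNIV A'"
    using orthonormal_on_extend by blast
  define A :: "complex^'n^'n" where "A = (\<chi> i. A' i)"
  define \<alpha> :: "complex^'n" where "\<alpha> = (\<chi> i. if i \<in> nz then s i else 0)"
  have "($) A = A'" unfolding A_def by auto
  then have "corth A" using A'(2) unfolding corth_iff_orthonormal_rows by simp
  moreover have "W$i$k = \<alpha>$i * A$i$k" for i k
    using A'(1) s(1)[of i] unfolding A_def \<alpha>_def nz_def by auto
  ultimately show thesis using that by blast
qed

lemma slice_cond_imp_OT:
  fixes T :: "complex^'n^'n^'n"
  assumes "slice_cond (xslice T)" and "slice_cond (yslice T)"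
  shows "T \<in> OT"
proof -
  obtain B C W :: "complex^'n^'n" where B: "corth B" and C: "corth C"
    and Wf: "\<And>k j l. xslice T k $ j $ l = (\<Sum>i\<in>UNIV. W$i$k * B$i$j * C$i$l)"
    using slice_cond_decomposition[OF assms(1)] by blast
  have Tf: "T$k$j$l = (\<Sum>i\<in>UNIV. W$i$k * B$i$j * C$i$l)" for k j l
    using Wf unfolding xslice_def by simp
  obtain A :: "complex^'n^'n" and \<alpha> :: "complex^'n" where A: "corth A" and W: "\<And>i k. W$i$k = \<alpha>$i * A$i$k"
    by (rule orthogonal_rows_factor[OF yslice_decomposed_rows_orthogonal[OF Tf B C assms(2)]
          yslice_decomposed_rows_nonisotropic[OF Tf B C assms(2)]]) (assumption | rule that)+
  have "T$k$j$l = (\<Sum>i\<in>UNIV. \<alpha>$i * A$i$k * B$i$j * C$i$l)" for k j l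
    unfolding Tf W ..
  then have "trilin T x y z = (\<Sum>i\<in>UNIV. \<alpha>$i * (A *v x)$i * (B *v y)$i * (C *v z)$i)" for x y z
    by (rule trilin_eq_decomposed)
  then show ?thesis unfolding OT_def using A B C by blast
qed

lemma sum_corth_rows_product:
  fixes Q :: "complex^'n^'n"
  assumes Q: "corth Q"
  shows "(\<Sum>j\<in>UNIV. (\<Sum>m\<in>UNIV. a m * Q$m$j) * (\<Sum>m\<in>UNIV. b m * Q$m$j)) = (\<Sum>m\<in>UNIV. a m * b m)"
proof -
  have QQ: "(\<Sum>j\<in>UNIV. Q$m$j * Q$m'$j) = (if m = m' then 1 else 0)" for m m'
    using corth_rows_bdot[OF Q, of m m'] unfolding bdot_def .
  have "(\<Sum>j\<in>UNIV. (\<Sum>m\<in>UNIV. a m * Q$m$j) * (\<Sum>m\<in>UNIV. b m * Q$m$j))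
      = (\<Sum>j\<in>UNIV. \<Sum>m\<in>UNIV. \<Sum>m'\<in>UNIV. (a m * Q$m$j) * (b m' * Q$m'$j))"
    by (simp only: sum_product)
  also have "\<dots> = (\<Sum>m\<in>UNIV. \<Sum>j\<in>UNIV. \<Sum>m'\<in>UNIV. (a m * Q$m$j) * (b m' * Q$m'$j))"
    by (rule sum.swap)
  also have "\<dots> = (\<Sum>m\<in>UNIV. \<Sum>m'\<in>UNIV. \<Sum>j\<in>UNIV. (a m * Q$m$j) * (b m' * Q$m'$j))"
    by (rule sum.cong[OF refl], rule sum.swap)
  also have "\<dots> = (\<Sum>m\<in>UNIV. \<Sum>m'\<in>UNIV. (a m * b m') * (\<Sum>j\<in>UNIV. Q$m$j * Q$m'$j))"
    unfolding sum_distrib_left by (rule sum.cong[OF refl], rule sum.cong[OF refl], rule sum.cong[OF refl]) (simp only: ac_simps)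
  also have "\<dots> = (\<Sum>m\<in>UNIV. a m * b m)" unfolding QQ by (simp add: if_distrib cong: if_cong)
  finally show ?thesis .
qed

lemma sum_delta_mult:
  fixes f :: "'n::finite \<Rightarrow> complex"
  shows "(\<Sum>m'\<in>UNIV. (if m' = m then 1 else 0) * f m') = f m"
proof -
  have "(\<Sum>m'\<in>UNIV. (if m' = m then 1 else 0) * f m') = (\<Sum>m'\<in>UNIV. if m' = m then f m' else 0)"
    by (rule sum.cong) auto
  then show ?thesis by simp
qed

lemma corth_combine_rows_decomposed:
  fixes N P :: "complex^'n^'n" and V :: "'n \<Rightarrow> complex^'n"
  assumes rowsN: "\<And>j. N$j = (\<Sum>m\<in>UNIV. (g m * P$m$j) *s V m)" and P: "corth P"
  shows "(\<Sum>j\<in>UNIV. P$m$j *s N$j) = g m *s V m"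
proof -
  have "(\<Sum>j\<in>UNIV. P$m$j *s N$j)$q = g m * V m $ q" for q
  proof -
    have "(\<Sum>j\<in>UNIV. P$m$j *s N$j)$q = (\<Sum>j\<in>UNIV. P$m$j * (\<Sum>m'\<in>UNIV. (g m' * V m' $ q) * P$m'$j))"
      unfolding rowsN by (simp add: ac_simps)
    also have "\<dots> = (\<Sum>j\<in>UNIV. (\<Sum>m'\<in>UNIV. (if m' = m then 1 else 0) * P$m'$j)
        * (\<Sum>m'\<in>UNIV. (g m' * V m' $ q) * P$m'$j))"
      unfolding sum_delta_mult ..
    also have "\<dots> = (\<Sum>m'\<in>UNIV. (if m' = m then 1 else 0) * (g m' * V m' $ q))"
      by (rule sum_corth_rows_product[OF P])
    also have "\<dots> = g m * V m $ q" by (rule sum_delta_mult)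
    finally show ?thesis .
  qed
  then show ?thesis by (simp add: vec_eq_iff)
qed

lemma span_rows_decomposed:
  fixes N P :: "complex^'n^'n" and V :: "'n \<Rightarrow> complex^'n"
  assumes rowsN: "\<And>j. N$j = (\<Sum>m\<in>UNIV. (g m * P$m$j) *s V m)" and P: "corth P"
  shows "vec.span (rows N) = vec.span {V m | m. g m \<noteq> 0}"
proof -
  have rN: "rows N = {N$j | j. True}" unfolding rows_def row_eq_nth by simp
  have "rows N \<subseteq> vec.span {V m | m. g m \<noteq> 0}"
  proof
    fix x assume "x \<in> rows N"
    then obtain j where x: "x = N$j" unfolding rN by blast
    have "(g m * P$m$j) *s V m \<in> vec.span {V m | m. g m \<noteq> 0}" for m
      by (cases "g m = 0") (auto simp: vec.span_zero intro: vec.span_scale vec.span_base)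
    then show "x \<in> vec.span {V m | m. g m \<noteq> 0}" unfolding x rowsN by (intro vec.span_sum)
  qed
  moreover have "{V m | m. g m \<noteq> 0} \<subseteq> vec.span (rows N)"
  proof
    fix x assume "x \<in> {V m | m. g m \<noteq> 0}"
    then obtain m where x: "x = V m" and g: "g m \<noteq> 0" by blast
    then have "V m = (1 / g m) *s (\<Sum>j\<in>UNIV. P$m$j *s N$j)"
      using corth_combine_rows_decomposed[OF rowsN P] by (simp add: vec.scale_scale)
    also have "\<dots> \<in> vec.span (rows N)"
      by (intro vec.span_scale vec.span_sum vec.span_base) (auto simp: rN)
    finally show "x \<in> vec.span (rows N)" unfolding x .
  qed
  ultimately show ?thesis unfolding vec.span_eq by blast
qed
lemma corth_eigenbasis_diagonalizable:
  fixes S R :: "complex^'n^'n"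
  assumes R: "corth R" and eig: "\<And>i. S *v R$i = d i *s R$i"
  shows "diagonalizable S"
proof -
  have "R ** transpose R = mat 1" using R unfolding corth_iff_orthonormal_rows orthonormal_rows_iff .
  moreover have "transpose R ** R = mat 1" using R unfolding corth_def .
  ultimately have "invertible (transpose R)" "matrix_inv (transpose R) = R"
    unfolding invertible_def by (auto intro: matrix_inv_unique)
  moreover have "(R ** S ** transpose R)$i$j = 0" if "i \<noteq> j" for i j
  proof -
    have "(R ** S ** transpose R)$i$j = bdot ((R ** S)$i) (R$j)" by (rule matrix_mul_transpose_component)
    also have "\<dots> = bdot (R$i) (S *v R$j)"
      by (simp add: matrix_vector_mult_component[symmetric] matrix_vector_mul_assoc del: transpose_matrix_vector)
    also have "\<dots> = 0" using that corth_rows_bdot[OF R] by (simp add: eig bdot_scale_right)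
    finally show ?thesis .
  qed
  ultimately show ?thesis unfolding diagonalizable_def is_diag_mat_def by metis
qed

lemma transpose_eqI: "(\<And>p q. X$q$p = X$p$q) \<Longrightarrow> transpose X = X"
  by (simp add: vec_eq_iff transpose_def)

lemma decomposed_slices_gram:
  fixes N :: "'n \<Rightarrow> complex^'n^'n" and Q R :: "complex^'n^'n"
  assumes Nf: "\<And>k j l. N k $ j $ l = (\<Sum>m\<in>UNIV. e k m * Q$m$j * R$m$l)"
    and Q: "corth Q" and R: "corth R"
  shows "(transpose (N a) ** N b)$p$q = (\<Sum>m\<in>UNIV. (e a m * R$m$p) * (e b m * R$m$q))"
    and "(N a ** transpose (N b))$p$q = (\<Sum>m\<in>UNIV. (e a m * Q$m$p) * (e b m * Q$m$q))"
proof -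
  have "(transpose (N a) ** N b)$p$q
      = (\<Sum>j\<in>UNIV. (\<Sum>m\<in>UNIV. (e a m * R$m$p) * Q$m$j) * (\<Sum>m\<in>UNIV. (e b m * R$m$q) * Q$m$j))"
    unfolding matrix_matrix_mult_def by (simp add: transpose_def Nf ac_simps)
  then show "(transpose (N a) ** N b)$p$q = (\<Sum>m\<in>UNIV. (e a m * R$m$p) * (e b m * R$m$q))"
    by (simp only: sum_corth_rows_product[OF Q])
  have "(N a ** transpose (N b))$p$q
      = (\<Sum>l\<in>UNIV. (\<Sum>m\<in>UNIV. (e a m * Q$m$p) * R$m$l) * (\<Sum>m\<in>UNIV. (e b m * Q$m$q) * R$m$l))"
    unfolding matrix_matrix_mult_def by (simp add: transpose_def Nf ac_simps)
  then show "(N a ** transpose (N b))$p$q = (\<Sum>m\<in>UNIV. (e a m * Q$m$p) * (e b m * Q$m$q))"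
    by (simp only: sum_corth_rows_product[OF R])
qed

lemma decomposed_slice_gram_eigenvector:
  fixes N :: "'n \<Rightarrow> complex^'n^'n" and Q R :: "complex^'n^'n"
  assumes Nf: "\<And>k j l. N k $ j $ l = (\<Sum>m\<in>UNIV. e k m * Q$m$j * R$m$l)"
    and Q: "corth Q" and R: "corth R"
  shows "(transpose (N k) ** N k) *v R$i = (e k i * e k i) *s R$i"
proof -
  have G: "(transpose (N k) ** N k)$p$q = (\<Sum>m\<in>UNIV. (e k m * R$m$p) * (e k m * R$m$q))" for p q
    by (rule decomposed_slices_gram(1)[OF Nf Q R])
  have "((transpose (N k) ** N k) *v R$i)$p = (\<Sum>m\<in>UNIV. (e k m * e k m * R$m$p) * bdot (R$m) (R$i))" for p
    unfolding matrix_vector_mult_def G bdot_def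
    by (simp add: sum_distrib_left sum_distrib_right ac_simps) (rule sum.swap)
  then show ?thesis
    unfolding vec_eq_iff corth_rows_bdot[OF R] by (simp add: if_distrib cong: if_cong)
qed

lemma decomposed_slice_rank:
  fixes N :: "'n \<Rightarrow> complex^'n^'n" and Q R :: "complex^'n^'n"
  assumes Nf: "\<And>k j l. N k $ j $ l = (\<Sum>m\<in>UNIV. e k m * Q$m$j * R$m$l)"
    and Q: "corth Q" and R: "corth R"
  shows "rank (N k) = rank (transpose (N k) ** N k)"
proof -
  have "N k $ j = (\<Sum>m\<in>UNIV. (e k m * Q$m$j) *s R$m)" for j
    by (simp add: vec_eq_iff Nf ac_simps)
  then have span_N: "vec.span (rows (N k)) = vec.span {R$m | m. e k m \<noteq> 0}"
    by (rule span_rows_decomposed[OF _ Q])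
  have "(transpose (N k) ** N k)$p$q = (\<Sum>m\<in>UNIV. (e k m * R$m$p) * (e k m * R$m$q))" for p q
    by (rule decomposed_slices_gram(1)[OF Nf Q R])
  then have "(transpose (N k) ** N k) $ p = (\<Sum>m\<in>UNIV. ((e k m * e k m) * R$m$p) *s R$m)" for p
    by (simp add: vec_eq_iff ac_simps)
  then have span_G: "vec.span (rows (transpose (N k) ** N k)) = vec.span {R$m | m. e k m \<noteq> 0}"
    using span_rows_decomposed[OF _ R] by simp
  have "vec.dim (rows (N k)) = vec.dim (vec.span (rows (N k)))" by (rule vec.dim_span[symmetric])
  also have "\<dots> = vec.dim (rows (transpose (N k) ** N k))" unfolding span_N span_G[symmetric] by (rule vec.dim_span)
  finally show ?thesis unfolding row_rank_def_gen .
qed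

lemma decomposed_slice_cond:
  fixes N :: "'n \<Rightarrow> complex^'n^'n" and Q R :: "complex^'n^'n"
  assumes Nf: "\<And>k j l. N k $ j $ l = (\<Sum>m\<in>UNIV. e k m * Q$m$j * R$m$l)"
    and Q: "corth Q" and R: "corth R"
  shows "slice_cond N"
proof -
  have "(transpose (N a) ** N b)$p$q = (\<Sum>m\<in>UNIV. (e a m * R$m$p) * (e b m * R$m$q))"
    "(N a ** transpose (N b))$p$q = (\<Sum>m\<in>UNIV. (e a m * Q$m$p) * (e b m * Q$m$q))" for a b p q
    by (rule decomposed_slices_gram[OF Nf Q R])+
  then have "transpose (transpose (N a) ** N b) = transpose (N a) ** N b"
    "transpose (N a ** transpose (N b)) = N a ** transpose (N b)" for a b
    by (intro transpose_eqI, simp only: ac_simps)+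
  moreover have "diagonalizable (transpose (N k) ** N k)" for k
    using corth_eigenbasis_diagonalizable[OF R decomposed_slice_gram_eigenvector[OF Nf Q R]] .
  moreover have "rank (N k) = rank (transpose (N k) ** N k)" for k
    by (rule decomposed_slice_rank[OF Nf Q R])
  ultimately show ?thesis unfolding slice_cond_def by blast
qed

lemma trilin_axis: "trilin T (axis k 1) (axis j 1) (axis l 1) = T$k$j$l"
proof -
  have h: "\<And>(x::complex) P. x * (if P then 1 else 0) = (if P then x else 0)" by simp
  show ?thesis unfolding trilin_def axis_def by (simp add: h)
qed

lemma OT_imp_slice_cond:
  fixes T :: "complex^'n^'n^'n"
  assumes "T \<in> OT"
  shows "slice_cond (xslice T)" "slice_cond (yslice T)" "slice_cond (zslice T)"
proof -
  obtain A B C :: "complex^'n^'n" and \<alpha> :: "complex^'n" where A: "corth A" and B: "corth B" and C: "corth C"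
    and T: "\<And>x y z. trilin T x y z = (\<Sum>i\<in>UNIV. \<alpha>$i * (A *v x)$i * (B *v y)$i * (C *v z)$i)"
    using assms unfolding OT_def by blast
  have Tf: "T$k$j$l = (\<Sum>i\<in>UNIV. \<alpha>$i * A$i$k * B$i$j * C$i$l)" for k j l
    using T[of "axis k 1" "axis j 1" "axis l 1"] by (simp add: trilin_axis matrix_vector_mult_axis)
  show "slice_cond (xslice T)"
    by (rule decomposed_slice_cond[where e="\<lambda>k i. \<alpha>$i * A$i$k", OF _ B C]) (simp add: xslice_def Tf)
  show "slice_cond (yslice T)"
    by (rule decomposed_slice_cond[where e="\<lambda>k i. \<alpha>$i * B$i$k", OF _ A C]) (simp add: yslice_def Tf ac_simps)
  show "slice_cond (zslice T)"
    by (rule decomposed_slice_cond[where e="\<lambda>k i. \<alpha>$i * C$i$k", OF _ A B]) (simp add: zslice_def Tf ac_simps)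
qed

theorem theorem39:
  fixes T :: "complex^'n^'n^'n"
  shows "T \<in> OT \<longleftrightarrow> slice_cond (xslice T) \<and> slice_cond (yslice T) \<and> slice_cond (zslice T)"
  using OT_imp_slice_cond slice_cond_imp_OT by blast

end
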